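(* Let $P,Q$ be probability distributions on $\mathbb R^d$, absolutely continuous with respect to Lebesgue measure, with finite second moments and $L$-Lipschitz continuous densities $p,q$. Let $\epsilon>0$ and $\lambda>\epsilon$. If $\mathcal W_2(p,q)<\epsilon^2$, then for every $x\in\mathbb R^d$ $$p_\lambda(x)\le\frac{vol_d(\lambda)}{vol_d(\lambda-\epsilon)}q_\lambda(x)+\Big(\frac{vol_d(\lambda)}{vol_d(\lambda-\epsilon)}-1\Big)2\lambda L+\frac{\epsilon}{vol_d(\lambda-\epsilon)}.$$
   Context: $\mathcal W_2$ is the 2-Wasserstein distance. $B^d_\lambda(x)$ denotes the Euclidean ball in $\mathbb R^d$ of radius $\lambda$ centered at $x$, $vol_d(\lambda)$ its volume, and for a density $p$, $p_\lambda(x)=\frac1{vol_d(\lambda)}\int_{B^d_\lambda(0)}p(x+z)\,dz$ (similarly $q_\lambda$). *)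

theory Defs
  imports "HOL-Probability.Probability"
begin

definition couplings :: "'a::euclidean_space measure \<Rightarrow> 'a measure \<Rightarrow> ('a \<times> 'a) measure set" where
  "couplings \<mu> \<nu> = {\<pi>. prob_space \<pi> \<and> sets \<pi> = sets (borel \<Otimes>\<^sub>M borel) \<and>
      distr \<pi> lborel fst = \<mu> \<and> distr \<pi> lborel snd = \<nu>}"

definition W2 :: "'a::euclidean_space measure \<Rightarrow> 'a measure \<Rightarrow> real" where
  "W2 \<mu> \<nu> = sqrt (enn2real (INF \<pi>\<in>couplings \<mu> \<nu>.
       \<integral>\<^sup>+ z. ennreal ((norm (fst z - snd z))\<^sup>2) \<partial>\<pi>))"

definition vol_ball :: "'a::euclidean_space itself \<Rightarrow> real \<Rightarrow> real" where
  "vol_ball _ r = measure lborel (ball (0::'a) r)"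

definition smooth_dens :: "real \<Rightarrow> ('a::euclidean_space \<Rightarrow> real) \<Rightarrow> 'a \<Rightarrow> real" where
  "smooth_dens r p x = (1 / vol_ball TYPE('a) r) * (LINT z : ball 0 r | lborel. p (x + z))"

end

theory Submission
  imports Defs
begin

text \<open>Transport: \<open>W\<^sub>2(P, Q) < \<epsilon>\<^sup>2\<close> gives a coupling
  of quadratic cost below \<open>\<epsilon>\<^sup>4\<close>, so by Markov's inequality it moves mass a distance \<open>\<ge> \<epsilon>\<close>
  with probability at most \<open>min 1 \<epsilon>\<^sup>2 \<le> \<epsilon>\<close>; hence \<open>P(B(x, \<lambda> - \<epsilon>)) \<le> Q(B(x, \<lambda>)) + \<epsilon>\<close>,
  i.e. \<open>vol(\<lambda> - \<epsilon>) p\<^bsub>\<lambda> - \<epsilon>\<^esub>(x) \<le> vol(\<lambda>) q\<^sub>\<lambda>(x) + \<epsilon>\<close>. Smoothness: on \<open>B(x, \<lambda>)\<close> the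
  density \<open>p\<close> stays within \<open>L\<lambda>\<close> of \<open>p(x)\<close>, so its average over \<open>B(x, \<lambda>)\<close> exceeds its
  average over \<open>B(x, \<lambda> - \<epsilon>)\<close> by at most \<open>(vol(\<lambda>)/vol(\<lambda> - \<epsilon>) - 1) 2\<lambda>L\<close>.\<close>

lemma (in prob_space) distr_pair_snd:
  assumes "sigma_finite_measure N"
  shows "distr (M \<Otimes>\<^sub>M N) N snd = N"
proof (intro measure_eqI)
  interpret N: sigma_finite_measure N by fact
  fix A assume A: "A \<in> sets (distr (M \<Otimes>\<^sub>M N) N snd)"
  then have "emeasure (distr (M \<Otimes>\<^sub>M N) N snd) A = emeasure (M \<Otimes>\<^sub>M N) (space M \<times> A)"
    by (auto simp: emeasure_distr space_pair_measure dest: sets.sets_into_space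
             intro!: arg_cong2[where f=emeasure])
  with A show "emeasure (distr (M \<Otimes>\<^sub>M N) N snd) A = emeasure N A"
    by (simp add: N.emeasure_pair_measure_Times emeasure_space_1)
qed simp

lemma prob_space_density_lborel:
  fixes p :: "'a::euclidean_space \<Rightarrow> real"
  assumes "p \<in> borel_measurable borel" "\<And>y. 0 \<le> p y" "(\<integral>y. p y \<partial>lborel) = 1"
  shows "prob_space (density lborel p)"
proof (rule prob_spaceI)
  have "integrable lborel p"
    using assms(3) not_integrable_integral_eq by fastforce
  then have "(\<integral>\<^sup>+ y. ennreal (p y) \<partial>lborel) = ennreal (\<integral>y. p y \<partial>lborel)"
    using assms by (intro nn_integral_eq_integral) auto
  then show "emeasure (density lborel p) (space (density lborel p)) = 1"
    using assms by (simp add: emeasure_density)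
qed

lemma nn_integral_density_lborel_norm_power2_finite:
  fixes p :: "'a::euclidean_space \<Rightarrow> real"
  assumes "p \<in> borel_measurable borel" "\<And>y. 0 \<le> p y"
    and "integrable lborel (\<lambda>y. (norm y)\<^sup>2 * p y)"
  shows "(\<integral>\<^sup>+ y. ennreal ((norm y)\<^sup>2) \<partial>density lborel p) < \<infinity>"
proof -
  have "(\<integral>\<^sup>+ y. ennreal ((norm y)\<^sup>2) \<partial>density lborel p)
      = (\<integral>\<^sup>+ y. ennreal ((norm y)\<^sup>2 * p y) \<partial>lborel)"
    using assms
    by (auto simp: nn_integral_density ennreal_mult' mult.commute intro!: nn_integral_cong)
  also have "\<dots> = ennreal (\<integral>y. (norm y)\<^sup>2 * p y \<partial>lborel)"
    using assms by (intro nn_integral_eq_integral) auto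
  finally show ?thesis by simp
qed

lemma couplings_pair_measure:
  assumes "prob_space \<mu>" "prob_space \<nu>" "sets \<mu> = sets borel" "sets \<nu> = sets borel"
  shows "\<mu> \<Otimes>\<^sub>M \<nu> \<in> couplings \<mu> \<nu>"
proof -
  interpret \<mu>: prob_space \<mu> by fact
  interpret \<nu>: prob_space \<nu> by fact
  have "distr (\<mu> \<Otimes>\<^sub>M \<nu>) lborel fst = distr (\<mu> \<Otimes>\<^sub>M \<nu>) \<mu> fst"
    using assms by (intro distr_cong) auto
  also have "\<dots> = \<mu>" by (rule \<nu>.distr_pair_fst)
  finally have "distr (\<mu> \<Otimes>\<^sub>M \<nu>) lborel fst = \<mu>" .
  moreover have "distr (\<mu> \<Otimes>\<^sub>M \<nu>) lborel snd = distr (\<mu> \<Otimes>\<^sub>M \<nu>) \<nu> snd"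
    using assms by (intro distr_cong) auto
  moreover have "distr (\<mu> \<Otimes>\<^sub>M \<nu>) \<nu> snd = \<nu>"
    by (rule \<mu>.distr_pair_snd) unfold_locales
  moreover have "sets (\<mu> \<Otimes>\<^sub>M \<nu>) = sets (borel \<Otimes>\<^sub>M borel)"
    using assms by (intro sets_pair_measure_cong) auto
  ultimately show ?thesis
    by (simp add: couplings_def prob_space_pair \<mu>.prob_space_axioms \<nu>.prob_space_axioms)
qed

lemma norm_diff_power2_le:
  fixes a b :: "'a::real_normed_vector"
  shows "(norm (a - b))\<^sup>2 \<le> 2 * (norm a)\<^sup>2 + 2 * (norm b)\<^sup>2"
proof -
  have "(norm (a - b))\<^sup>2 \<le> (norm a + norm b)\<^sup>2"
    by (intro power_mono norm_triangle_ineq4) auto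
  also have "\<dots> \<le> 2 * (norm a)\<^sup>2 + 2 * (norm b)\<^sup>2"
    using sum_squares_ge_zero[of "norm a - norm b" 0] by (simp add: power2_eq_square algebra_simps)
  finally show ?thesis .
qed

lemma couplings_measurable_eq:
  "\<pi> \<in> couplings \<mu> \<nu> \<Longrightarrow> measurable \<pi> K = measurable (borel \<Otimes>\<^sub>M borel) K"
  by (rule measurable_cong_sets) (auto simp: couplings_def)

lemma transport_cost_le:
  fixes \<mu> \<nu> :: "'a::euclidean_space measure"
  assumes \<pi>: "\<pi> \<in> couplings \<mu> \<nu>"
  shows "(\<integral>\<^sup>+ z. ennreal ((norm (fst z - snd z))\<^sup>2) \<partial>\<pi>)
    \<le> 2 * (\<integral>\<^sup>+ y. ennreal ((norm y)\<^sup>2) \<partial>\<mu>) + 2 * (\<integral>\<^sup>+ y. ennreal ((norm y)\<^sup>2) \<partial>\<nu>)"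
proof -
  note [measurable_cong] = couplings_measurable_eq[OF \<pi>]
  let ?m = "\<lambda>y::'a. ennreal ((norm y)\<^sup>2)"
  have "(\<integral>\<^sup>+ z. ennreal ((norm (fst z - snd z))\<^sup>2) \<partial>\<pi>) \<le> (\<integral>\<^sup>+ z. 2 * ?m (fst z) + 2 * ?m (snd z) \<partial>\<pi>)"
  proof (intro nn_integral_mono)
    fix z :: "'a \<times> 'a"
    have "ennreal ((norm (fst z - snd z))\<^sup>2) \<le> ennreal (2 * (norm (fst z))\<^sup>2 + 2 * (norm (snd z))\<^sup>2)"
      by (intro ennreal_leI norm_diff_power2_le)
    then show "ennreal ((norm (fst z - snd z))\<^sup>2) \<le> 2 * ?m (fst z) + 2 * ?m (snd z)"
      by (simp add: ennreal_plus ennreal_mult)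
  qed
  also have "\<dots> = 2 * (\<integral>\<^sup>+ z. ?m (fst z) \<partial>\<pi>) + 2 * (\<integral>\<^sup>+ z. ?m (snd z) \<partial>\<pi>)"
    by (simp add: nn_integral_add nn_integral_cmult)
  also have "(\<integral>\<^sup>+ z. ?m (fst z) \<partial>\<pi>) = (\<integral>\<^sup>+ y. ?m y \<partial>distr \<pi> lborel fst)"
    by (subst nn_integral_distr) auto
  also have "(\<integral>\<^sup>+ z. ?m (snd z) \<partial>\<pi>) = (\<integral>\<^sup>+ y. ?m y \<partial>distr \<pi> lborel snd)"
    by (subst nn_integral_distr) auto
  finally show ?thesis
    using \<pi> by (simp add: couplings_def)
qed

text \<open>The finite-cost coupling is needed because \<^const>\<open>enn2real\<close> sends \<open>\<infinity>\<close> to \<open>0\<close>: without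
  one, \<^const>\<open>W2\<close> would be \<open>0\<close>.\<close>

lemma W2_lessE:
  assumes "\<pi>\<^sub>0 \<in> couplings \<mu> \<nu>" "(\<integral>\<^sup>+ z. ennreal ((norm (fst z - snd z))\<^sup>2) \<partial>\<pi>\<^sub>0) < \<infinity>"
    and "W2 \<mu> \<nu> < \<delta>"
  obtains \<pi> where "\<pi> \<in> couplings \<mu> \<nu>"
    and "(\<integral>\<^sup>+ z. ennreal ((norm (fst z - snd z))\<^sup>2) \<partial>\<pi>) < ennreal (\<delta>\<^sup>2)"
proof -
  define I where "I = (INF \<pi>\<in>couplings \<mu> \<nu>. \<integral>\<^sup>+ z. ennreal ((norm (fst z - snd z))\<^sup>2) \<partial>\<pi>)"
  have "I < \<infinity>"
    unfolding I_def using assms(1,2) by (rule INF_lower[THEN le_less_trans])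
  have "sqrt (enn2real I) < \<delta>"
    using assms(3) by (simp add: W2_def I_def)
  then have "enn2real I < \<delta>\<^sup>2"
    using power_strict_mono[of "sqrt (enn2real I)" \<delta> 2] by simp
  with \<open>I < \<infinity>\<close> have "I < ennreal (\<delta>\<^sup>2)"
    by (simp add: ennreal_enn2real_if ennreal_less_iff)
  then show ?thesis
    using that by (auto simp: I_def INF_less_iff)
qed

lemma coupling_Markov_inequality:
  fixes \<mu> \<nu> :: "'a::euclidean_space measure"
  assumes \<pi>: "\<pi> \<in> couplings \<mu> \<nu>" and "0 \<le> \<epsilon>"
  shows "ennreal (\<epsilon>\<^sup>2) * emeasure \<pi> {z \<in> space \<pi>. \<epsilon> \<le> norm (fst z - snd z)}
    \<le> (\<integral>\<^sup>+ z. ennreal ((norm (fst z - snd z))\<^sup>2) \<partial>\<pi>)"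
proof -
  note [measurable_cong] = couplings_measurable_eq[OF \<pi>]
  let ?E = "{z \<in> space \<pi>. \<epsilon> \<le> norm (fst z - snd z)}"
  have "ennreal (\<epsilon>\<^sup>2) * emeasure \<pi> ?E = (\<integral>\<^sup>+ z. ennreal (\<epsilon>\<^sup>2) * indicator ?E z \<partial>\<pi>)"
    by (simp add: nn_integral_cmult_indicator)
  also have "\<dots> \<le> (\<integral>\<^sup>+ z. ennreal ((norm (fst z - snd z))\<^sup>2) \<partial>\<pi>)"
    using \<open>0 \<le> \<epsilon>\<close>
    by (intro nn_integral_mono) (auto simp: indicator_def intro!: ennreal_leI power_mono)
  finally show ?thesis .
qed

lemma coupling_measure_le:
  fixes \<mu> \<nu> :: "'a::euclidean_space measure"
  assumes \<pi>: "\<pi> \<in> couplings \<mu> \<nu>" and [measurable]: "B\<^sub>1 \<in> sets borel" "B\<^sub>2 \<in> sets borel"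
    and close: "\<And>y z. y \<in> B\<^sub>1 \<Longrightarrow> norm (y - z) < \<epsilon> \<Longrightarrow> z \<in> B\<^sub>2"
  shows "measure \<mu> B\<^sub>1 \<le> measure \<nu> B\<^sub>2 + measure \<pi> {z \<in> space \<pi>. \<epsilon> \<le> norm (fst z - snd z)}"
proof -
  interpret prob_space \<pi>
    using \<pi> by (simp add: couplings_def)
  note [measurable_cong] = couplings_measurable_eq[OF \<pi>]
  let ?E = "{z \<in> space \<pi>. \<epsilon> \<le> norm (fst z - snd z)}"
  have "measure \<mu> B\<^sub>1 = measure \<pi> (fst -` B\<^sub>1 \<inter> space \<pi>)"
    using \<pi> by (auto simp: couplings_def measure_distr)
  also have "\<dots> \<le> measure \<pi> ((snd -` B\<^sub>2 \<inter> space \<pi>) \<union> ?E)"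
    using close by (intro finite_measure_mono) (auto simp: not_le)
  also have "\<dots> \<le> measure \<pi> (snd -` B\<^sub>2 \<inter> space \<pi>) + measure \<pi> ?E"
    by (intro measure_Un_le) auto
  also have "measure \<pi> (snd -` B\<^sub>2 \<inter> space \<pi>) = measure \<nu> B\<^sub>2"
    using \<pi> by (auto simp: couplings_def measure_distr)
  finally show ?thesis .
qed

lemma W2_less_imp_measure_le:
  fixes \<mu> \<nu> :: "'a::euclidean_space measure"
  assumes "prob_space \<mu>" "prob_space \<nu>" "sets \<mu> = sets borel" "sets \<nu> = sets borel"
    and "(\<integral>\<^sup>+ y. ennreal ((norm y)\<^sup>2) \<partial>\<mu>) < \<infinity>" "(\<integral>\<^sup>+ y. ennreal ((norm y)\<^sup>2) \<partial>\<nu>) < \<infinity>"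
    and W: "W2 \<mu> \<nu> < \<delta>" and "0 < \<epsilon>"
    and "B\<^sub>1 \<in> sets borel" "B\<^sub>2 \<in> sets borel"
    and "\<And>y z. y \<in> B\<^sub>1 \<Longrightarrow> norm (y - z) < \<epsilon> \<Longrightarrow> z \<in> B\<^sub>2"
  shows "measure \<mu> B\<^sub>1 \<le> measure \<nu> B\<^sub>2 + min 1 ((\<delta> / \<epsilon>)\<^sup>2)"
proof -
  let ?cost = "\<lambda>\<pi>. \<integral>\<^sup>+ z. ennreal ((norm (fst z - snd z))\<^sup>2) \<partial>\<pi>"
  have "\<mu> \<Otimes>\<^sub>M \<nu> \<in> couplings \<mu> \<nu>"
    using assms by (intro couplings_pair_measure)
  moreover have "?cost (\<mu> \<Otimes>\<^sub>M \<nu>) < \<infinity>"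
    using transport_cost_le[OF \<open>\<mu> \<Otimes>\<^sub>M \<nu> \<in> couplings \<mu> \<nu>\<close>] assms(5,6)
    by (auto simp: ennreal_mult_less_top order.strict_trans1)
  ultimately obtain \<pi> where \<pi>: "\<pi> \<in> couplings \<mu> \<nu>" and "?cost \<pi> < ennreal (\<delta>\<^sup>2)"
    using W by (rule W2_lessE)
  interpret prob_space \<pi>
    using \<pi> by (simp add: couplings_def)
  define E where "E = {z \<in> space \<pi>. \<epsilon> \<le> norm (fst z - snd z)}"
  have "ennreal (\<epsilon>\<^sup>2 * measure \<pi> E) < ennreal (\<delta>\<^sup>2)"
    using coupling_Markov_inequality[OF \<pi>, of \<epsilon>] \<open>?cost \<pi> < _\<close> \<open>0 < \<epsilon>\<close>
    by (simp add: E_def emeasure_eq_measure ennreal_mult)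
  then have "measure \<pi> E \<le> (\<delta> / \<epsilon>)\<^sup>2"
    using \<open>0 < \<epsilon>\<close> by (simp add: ennreal_less_iff field_simps power_divide)
  then have "measure \<pi> E \<le> min 1 ((\<delta> / \<epsilon>)\<^sup>2)"
    by simp
  moreover have "measure \<mu> B\<^sub>1 \<le> measure \<nu> B\<^sub>2 + measure \<pi> E"
    unfolding E_def using \<pi> assms(9-11) by (rule coupling_measure_le)
  ultimately show ?thesis
    by linarith
qed

lemma set_integrable_ball_continuous:
  fixes f :: "'a::euclidean_space \<Rightarrow> 'b::{banach, second_countable_topology}"
  assumes "continuous_on UNIV f"
  shows "set_integrable lborel (ball c r) f"
proof (rule set_integrable_subset)
  show "set_integrable lborel (cball c r) f"
    unfolding set_integrable_def
    using assms by (intro borel_integrable_compact) (auto intro: continuous_on_subset)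
qed auto

lemma vol_ball_pos: "0 < r \<Longrightarrow> 0 < vol_ball TYPE('a::euclidean_space) r"
  by (simp add: vol_ball_def)

lemma vol_ball_mono: "r' \<le> r \<Longrightarrow> vol_ball TYPE('a::euclidean_space) r' \<le> vol_ball TYPE('a) r"
  unfolding vol_ball_def using emeasure_lborel_ball_finite[of "0::'a" r]
  by (intro measure_mono_fmeasurable) (auto simp: fmeasurable_def)

lemma measure_density_lborel_ball:
  fixes p :: "'a::euclidean_space \<Rightarrow> real"
  assumes "continuous_on UNIV p" "\<And>y. 0 \<le> p y" "0 < r"
  shows "measure (density lborel p) (ball x r) = vol_ball TYPE('a) r * smooth_dens r p x"
proof -
  have [measurable]: "p \<in> borel_measurable borel"
    using assms(1) by (rule borel_measurable_continuous_onI)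
  have [measurable]: "ball x r \<in> sets borel"
    by simp
  have "emeasure (density lborel p) (ball x r)
      = (\<integral>\<^sup>+ y. ennreal (p y) * indicator (ball x r) y \<partial>lborel)"
    by (simp add: emeasure_density)
  also have "\<dots> = (\<integral>\<^sup>+ z. ennreal (p (x + z)) * indicator (ball x r) (x + z) \<partial>lborel)"
    by (subst (1) lborel_distr_plus[of x, symmetric]) (rule nn_integral_distr; measurable)
  also have "\<dots> = (\<integral>\<^sup>+ z. ennreal (indicator (ball 0 r) z *\<^sub>R p (x + z)) \<partial>lborel)"
    by (intro nn_integral_cong) (auto simp: indicator_def dist_norm)
  also have "\<dots> = ennreal (LINT z : ball 0 r | lborel. p (x + z))"
    unfolding set_lebesgue_integral_def
  proof (intro nn_integral_eq_integral)
    have "continuous_on UNIV (\<lambda>z. p (x + z))"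
      using assms(1) by (intro continuous_on_compose2[OF assms(1)] continuous_intros) auto
    then show "integrable lborel (\<lambda>z. indicator (ball 0 r) z *\<^sub>R p (x + z))"
      using set_integrable_ball_continuous unfolding set_integrable_def by blast
  qed (use assms(2) in auto)
  moreover have "0 \<le> (LINT z : ball 0 r | lborel. p (x + z))"
    unfolding set_lebesgue_integral_def using assms(2) by simp
  ultimately show ?thesis
    using vol_ball_pos[OF assms(3), where 'a='a] by (simp add: measure_def smooth_dens_def)
qed

lemma set_integral_le_measure_mult:
  fixes f :: "'a \<Rightarrow> real"
  assumes "set_integrable M A f" "A \<in> sets M" "emeasure M A < \<infinity>" "\<And>z. z \<in> A \<Longrightarrow> f z \<le> b"
  shows "(LINT z : A | M. f z) \<le> measure M A * b"
proof -
  have "(LINT z : A | M. f z) \<le> (LINT z : A | M. b)"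
    using assms by (intro set_integral_mono) (auto simp: set_integrable_def less_top)
  then show ?thesis
    using assms(2,3) by (simp add: set_integral_const less_top)
qed

lemma measure_mult_le_set_integral:
  fixes f :: "'a \<Rightarrow> real"
  assumes "set_integrable M A f" "A \<in> sets M" "emeasure M A < \<infinity>" "\<And>z. z \<in> A \<Longrightarrow> b \<le> f z"
  shows "measure M A * b \<le> (LINT z : A | M. f z)"
proof -
  have "(LINT z : A | M. b) \<le> (LINT z : A | M. f z)"
    using assms by (intro set_integral_mono) (auto simp: set_integrable_def less_top)
  then show ?thesis
    using assms(2,3) by (simp add: set_integral_const less_top)
qed

text \<open>Here \<open>I, I'\<close> are the integrals of a function over an outer and an inner ball of volumes
  \<open>V, V'\<close>, on which the function lies within \<open>M\<close> of \<open>c\<close>.\<close>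

lemma average_le_inner_average:
  fixes I I' V V' c M :: real
  assumes outer: "I \<le> I' + (V - V') * (c + M)" and inner: "V' * (c - M) \<le> I'"
    and "0 < V'" "V' \<le> V" "0 \<le> M"
  shows "I / V \<le> I' / V' + (V / V' - 1) * (2 * M)"
proof -
  have "c + M \<le> I' / V' + 2 * M"
    using inner \<open>0 < V'\<close> by (simp add: field_simps)
  then have "(V - V') * (c + M) \<le> (V - V') * (I' / V' + 2 * M)"
    using \<open>V' \<le> V\<close> by (intro mult_left_mono) auto
  then have "I \<le> I' + (V - V') * (I' / V' + 2 * M)"
    using outer by simp
  also have "\<dots> = V * (I' / V') + (V - V') * (2 * M)"
    using \<open>0 < V'\<close> by (simp add: field_simps)
  also have "(V - V') * (2 * M) \<le> V * ((V / V' - 1) * (2 * M))"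
  proof -
    have "V - V' \<le> (V - V') * (V / V')"
      using \<open>0 < V'\<close> \<open>V' \<le> V\<close> mult_left_mono[of 1 "V / V'" "V - V'"] by simp
    also have "\<dots> = V * (V / V' - 1)"
      using \<open>0 < V'\<close> by (simp add: field_simps)
    finally show ?thesis
      using \<open>0 \<le> M\<close> by (metis mult.assoc mult_right_mono zero_le_mult_iff zero_le_numeral)
  qed
  finally have "I \<le> V * (I' / V' + (V / V' - 1) * (2 * M))"
    by (simp add: algebra_simps)
  then show ?thesis
    using \<open>0 < V'\<close> \<open>V' \<le> V\<close> by (subst pos_divide_le_eq) (auto simp: mult.commute)
qed

lemma set_integral_ball_le_smaller_ball:
  fixes f :: "'a::euclidean_space \<Rightarrow> real"
  assumes int: "set_integrable lborel (ball 0 r) f" and "r' \<le> r"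
    and bound: "\<And>z. z \<in> ball 0 r - ball 0 r' \<Longrightarrow> f z \<le> b"
  shows "(LINT z : ball 0 r | lborel. f z)
    \<le> (LINT z : ball 0 r' | lborel. f z) + (vol_ball TYPE('a) r - vol_ball TYPE('a) r') * b"
proof -
  define Ann where "Ann = ball (0::'a) r - ball 0 r'"
  have int_Ann: "set_integrable lborel Ann f"
    using int by (rule set_integrable_subset) (auto simp: Ann_def)
  have "ball 0 r = ball 0 r' \<union> Ann" "ball 0 r' \<inter> Ann = {}"
    using \<open>r' \<le> r\<close> by (auto simp: Ann_def)
  then have "(LINT z : ball 0 r | lborel. f z)
      = (LINT z : ball 0 r' | lborel. f z) + (LINT z : Ann | lborel. f z)"
    using set_integral_Un[OF _ set_integrable_subset[OF int] int_Ann] by simp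
  also have "(LINT z : Ann | lborel. f z) \<le> measure lborel Ann * b"
    unfolding Ann_def using int_Ann bound
    by (intro set_integral_le_measure_mult
          le_less_trans[OF emeasure_mono emeasure_lborel_ball_finite]) (auto simp: Ann_def)
  also have "measure lborel Ann = vol_ball TYPE('a) r - vol_ball TYPE('a) r'"
    unfolding Ann_def vol_ball_def using \<open>r' \<le> r\<close> emeasure_lborel_ball_finite[of "0::'a" r]
    by (intro measure_Diff) auto
  finally show ?thesis
    by simp
qed

lemma smooth_dens_le_smaller_radius:
  fixes p :: "'a::euclidean_space \<Rightarrow> real"
  assumes lip: "L-lipschitz_on UNIV p" and "0 < r'" "r' \<le> r"
  shows "smooth_dens r p x
    \<le> smooth_dens r' p x + (vol_ball TYPE('a) r / vol_ball TYPE('a) r' - 1) * (2 * r * L)"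
proof -
  define f where "f z = p (x + z)" for z
  have "0 \<le> L"
    using lip by (rule lipschitz_on_nonneg)
  have near: "\<bar>f z - p x\<bar> \<le> L * r" if "z \<in> ball 0 r" for z
  proof -
    have "\<bar>f z - p x\<bar> \<le> L * dist (x + z) x"
      using lipschitz_onD[OF lip] by (simp add: f_def dist_real_def)
    also have "\<dots> \<le> L * r"
      using that \<open>0 \<le> L\<close> by (intro mult_left_mono) (auto simp: dist_norm)
    finally show ?thesis .
  qed
  have "continuous_on UNIV f"
    unfolding f_def
    by (intro continuous_on_compose2[OF lipschitz_on_continuous_on[OF lip]] continuous_intros) auto
  then have int: "set_integrable lborel (ball 0 s) f" for s
    by (rule set_integrable_ball_continuous)
  have outer: "(LINT z : ball 0 r | lborel. f z) \<le> (LINT z : ball 0 r' | lborel. f z)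
      + (vol_ball TYPE('a) r - vol_ball TYPE('a) r') * (p x + L * r)"
  proof (rule set_integral_ball_le_smaller_ball[OF int \<open>r' \<le> r\<close>])
    fix z :: 'a
    assume "z \<in> ball 0 r - ball 0 r'"
    then show "f z \<le> p x + L * r"
      using near[of z] by (auto simp: abs_le_iff)
  qed
  have inner: "vol_ball TYPE('a) r' * (p x - L * r) \<le> (LINT z : ball 0 r' | lborel. f z)"
    unfolding vol_ball_def
  proof (rule measure_mult_le_set_integral[OF int _ emeasure_lborel_ball_finite])
    fix z :: 'a
    assume "z \<in> ball 0 r'"
    then show "p x - L * r \<le> f z"
      using near[of z] assms(3) by (auto simp: abs_le_iff)
  qed simp
  have "0 < vol_ball TYPE('a) r'" "vol_ball TYPE('a) r' \<le> vol_ball TYPE('a) r"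
    using assms(2,3) by (simp_all add: vol_ball_pos vol_ball_mono)
  with \<open>0 \<le> L\<close> assms(2,3) have "(LINT z : ball 0 r | lborel. f z) / vol_ball TYPE('a) r
      \<le> (LINT z : ball 0 r' | lborel. f z) / vol_ball TYPE('a) r'
        + (vol_ball TYPE('a) r / vol_ball TYPE('a) r' - 1) * (2 * (L * r))"
    by (intro average_le_inner_average[OF outer inner]) auto
  then show ?thesis
    by (simp add: smooth_dens_def f_def mult_ac)
qed

theorem theorem2:
  fixes p q :: "'a::euclidean_space \<Rightarrow> real" and L \<epsilon> lam :: real and x :: 'a
  assumes p_meas: "p \<in> borel_measurable borel" and q_meas: "q \<in> borel_measurable borel"
    and p_nonneg: "\<And>y. p y \<ge> 0" and q_nonneg: "\<And>y. q y \<ge> 0"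
    and p_int: "integrable lborel p" and q_int: "integrable lborel q"
    and p_one: "(\<integral>y. p y \<partial>lborel) = 1" and q_one: "(\<integral>y. q y \<partial>lborel) = 1"
    and p_mom: "integrable lborel (\<lambda>y. (norm y)\<^sup>2 * p y)"
    and q_mom: "integrable lborel (\<lambda>y. (norm y)\<^sup>2 * q y)"
    and p_lip: "L-lipschitz_on UNIV p" and q_lip: "L-lipschitz_on UNIV q"
    and eps: "\<epsilon> > 0" and lam_gt: "lam > \<epsilon>"
    and W: "W2 (density lborel p) (density lborel q) < \<epsilon>\<^sup>2"
  shows "smooth_dens lam p x \<le>
      vol_ball TYPE('a) lam / vol_ball TYPE('a) (lam - \<epsilon>) * smooth_dens lam q x
      + (vol_ball TYPE('a) lam / vol_ball TYPE('a) (lam - \<epsilon>) - 1) * (2 * lam * L)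
      + \<epsilon> / vol_ball TYPE('a) (lam - \<epsilon>)"
proof -
  define V where "V = vol_ball TYPE('a) lam"
  define V' where "V' = vol_ball TYPE('a) (lam - \<epsilon>)"
  have "0 < V'"
    unfolding V'_def using lam_gt by (simp add: vol_ball_pos)
  have p_cont: "continuous_on UNIV p" and q_cont: "continuous_on UNIV q"
    using p_lip q_lip by (simp_all add: lipschitz_on_continuous_on)
  have "measure (density lborel p) (ball x (lam - \<epsilon>))
      \<le> measure (density lborel q) (ball x lam) + min 1 ((\<epsilon>\<^sup>2 / \<epsilon>)\<^sup>2)"
  proof (rule W2_less_imp_measure_le[OF _ _ _ _
        nn_integral_density_lborel_norm_power2_finite[OF p_meas p_nonneg p_mom]
        nn_integral_density_lborel_norm_power2_finite[OF q_meas q_nonneg q_mom] W eps])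
    fix y z :: 'a
    assume "y \<in> ball x (lam - \<epsilon>)" "norm (y - z) < \<epsilon>"
    then show "z \<in> ball x lam"
      using dist_triangle[of x z y] by (simp add: dist_norm)
  qed (use p_meas q_meas p_nonneg q_nonneg p_one q_one in \<open>auto intro: prob_space_density_lborel\<close>)
  moreover have "min 1 ((\<epsilon>\<^sup>2 / \<epsilon>)\<^sup>2) \<le> \<epsilon>"
    using eps by (cases "\<epsilon> \<le> 1") (auto simp: power2_eq_square mult_le_one)
  ultimately have "V' * smooth_dens (lam - \<epsilon>) p x \<le> V * smooth_dens lam q x + \<epsilon>"
    using measure_density_lborel_ball[OF p_cont p_nonneg]
      measure_density_lborel_ball[OF q_cont q_nonneg] eps lam_gt
    by (simp add: V_def V'_def)
  then have "smooth_dens (lam - \<epsilon>) p x \<le> V / V' * smooth_dens lam q x + \<epsilon> / V'"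
    using \<open>0 < V'\<close> by (simp add: field_simps)
  moreover have "smooth_dens lam p x \<le> smooth_dens (lam - \<epsilon>) p x + (V / V' - 1) * (2 * lam * L)"
    unfolding V_def V'_def using p_lip eps lam_gt by (intro smooth_dens_le_smaller_radius) auto
  ultimately show ?thesis
    unfolding V_def V'_def by linarith
qed

end
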